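(* Let $F\subset\mathrm{Sym}^2(\mathbb{R}^n)$ be a cone subequation invariant under a subgroup of $\mathrm{O}(n)$ acting transitively on $S^{n-1}$, with Riesz characteristic $p=p_F$ and dual Riesz characteristic $q=q_F$. For $\delta\ge0$ let $F(\delta)=\{A: A+\delta(\mathrm{tr}A)\frac1nI\in F\}$. Then the Riesz characteristics of $F(\delta)$ are given by $$p_{F(\delta)}=\frac{n(1+\delta)p}{n+\delta p}=p+\frac{\delta p(n-p)}{n+\delta p},\qquad q_{F(\delta)}=\frac{n(1+\delta)q}{n+\delta q}=q+\frac{\delta q(n-q)}{n+\delta q}.$$ These formulas also hold when $p_F=\infty$ or $q_F=\infty$, that is, for $\delta>0$: $p_F=\infty\Rightarrow p_{F(\delta)}=\frac{n(1+\delta)}{\delta}$ and $q_F=\infty\Rightarrow q_{F(\delta)}=\frac{n(1+\delta)}{\delta}$.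
   Context: A cone subequation is a closed $F\subset\mathrm{Sym}^2(\mathbb{R}^n)$, $\emptyset\ne F\ne\mathrm{Sym}^2(\mathbb{R}^n)$, with $F+\{A\ge0\}\subset F$ and $tF\subset F$ for $t\ge0$. Its Riesz characteristic is $p_F=\sup\{t:P_{e^\perp}-(t-1)P_e\in F\}$ for a (any) unit vector $e$ ($P_e,P_{e^\perp}$ orthogonal projections onto $\mathbb{R}e$, $e^\perp$). The dual of $F$ is $\widetilde F=\mathrm{Sym}^2(\mathbb{R}^n)\setminus(-\mathrm{Int}\,F)$, and the dual Riesz characteristic is $q_F=p_{\widetilde F}$; for $F(\delta)$, $p_{F(\delta)}$ and $q_{F(\delta)}$ are defined in the same way. *)

theory Defs
  imports "HOL-Analysis.Analysis"
begin

definition Sym2 :: "(real^'n^'n) set" where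
  "Sym2 = {A. transpose A = A}"

definition psd :: "real^'n^'n \<Rightarrow> bool" where
  "psd A \<longleftrightarrow> A \<in> Sym2 \<and> (\<forall>x. 0 \<le> x \<bullet> (A *v x))"

definition cone_subequation :: "(real^'n^'n) set \<Rightarrow> bool" where
  "cone_subequation F \<longleftrightarrow>
     F \<subseteq> Sym2 \<and> closed F \<and> F \<noteq> {} \<and> F \<noteq> Sym2 \<and>
     (\<forall>A\<in>F. \<forall>P. psd P \<longrightarrow> A + P \<in> F) \<and>
     (\<forall>A\<in>F. \<forall>t::real. t \<ge> 0 \<longrightarrow> t *\<^sub>R A \<in> F)"

definition proj_line :: "real^'n \<Rightarrow> real^'n^'n" where
  "proj_line e = (\<chi> i j. e$i * e$j)"

definition proj_perp :: "real^'n \<Rightarrow> real^'n^'n" where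
  "proj_perp e = mat 1 - proj_line e"

definition riesz_char :: "(real^'n^'n) set \<Rightarrow> real^'n \<Rightarrow> ereal" where
  "riesz_char F e = Sup {ereal t | t. proj_perp e - (t - 1) *\<^sub>R proj_line e \<in> F}"

definition dual_subeq :: "(real^'n^'n) set \<Rightarrow> (real^'n^'n) set" where
  "dual_subeq F = Sym2 - uminus ` ((top_of_set Sym2) interior_of F)"

definition F_delta :: "(real^'n^'n) set \<Rightarrow> real \<Rightarrow> (real^'n^'n) set" where
  "F_delta F \<delta> = {A \<in> Sym2. A + (\<delta> * trace A / real CARD('n)) *\<^sub>R mat 1 \<in> F}"

definition transitive_orth_subgroup :: "(real^'n^'n) set \<Rightarrow> bool" where
  "transitive_orth_subgroup G \<longleftrightarrow>
     (\<forall>g\<in>G. orthogonal_matrix g) \<and> mat 1 \<in> G \<and>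
     (\<forall>g\<in>G. \<forall>h\<in>G. g ** h \<in> G) \<and> (\<forall>g\<in>G. transpose g \<in> G) \<and>
     (\<forall>u v. norm u = 1 \<longrightarrow> norm v = 1 \<longrightarrow> (\<exists>g\<in>G. g *v u = v))"

definition invariant_under :: "(real^'n^'n) set \<Rightarrow> (real^'n^'n) set \<Rightarrow> bool" where
  "invariant_under G F \<longleftrightarrow> (\<forall>g\<in>G. \<forall>A\<in>F. g ** A ** transpose g \<in> F)"

end

theory Submission
  imports Defs
begin

text \<open>
  Along the unit vector \<open>e\<close> everything happens among the matrices \<open>a P\<^sub>e\<^sub>\<bottom> + b P\<^sub>e\<close>.
  Since \<open>P\<^sub>e\<^sub>\<bottom> - (t - 1) P\<^sub>e\<close> has trace \<open>n - t\<close>, the definition of \<open>F(\<delta>)\<close> shifts it to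
  \<open>c P\<^sub>e\<^sub>\<bottom> + (c - t) P\<^sub>e\<close> with \<open>c = 1 + \<delta>(n - t)/n\<close>. For \<open>c > 0\<close> the cone property turns
  membership into \<open>t/c\<close> lying in the Riesz set \<open>{t. P\<^sub>e\<^sub>\<bottom> - (t - 1) P\<^sub>e \<in> F} = (-\<infinity>, p]\<close>,
  and \<open>t/c \<le> p\<close> solves to \<open>t \<le> n(1 + \<delta>)p/(n + \<delta>p)\<close>; for \<open>c \<le> 0\<close> the matrix is
  negative semidefinite, which is excluded unless \<open>c = 0\<close> and \<open>p = \<infinity>\<close>. If \<open>p = \<infinity>\<close>,
  closedness puts \<open>-P\<^sub>e\<close> into \<open>F\<close> and the condition becomes \<open>c \<ge> 0\<close>, i.e.
  \<open>t \<le> n(1 + \<delta>)/\<delta>\<close>. The dual is handled by the same argument, because the dual of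
  \<open>F(\<delta>)\<close> is the \<open>\<delta>\<close>-version of the dual of \<open>F\<close>, and the dual of a cone subequation
  shares all properties used: closed, monotone under positive semidefinite matrices,
  conic, and free of negative definite \<open>a P\<^sub>e\<^sub>\<bottom> + b P\<^sub>e\<close>.
\<close>

lemma subspace_Sym2: "subspace (Sym2 :: (real^'n^'n) set)"
  by (auto simp: subspace_def Sym2_def transpose_def vec_eq_iff)

lemma closed_Sym2: "closed (Sym2 :: (real^'n^'n) set)"
  unfolding Sym2_def transpose_def by (intro closed_Collect_eq continuous_intros)

lemma mat_1_in_Sym2: "(mat 1 :: real^'n^'n) \<in> Sym2"
  by (simp add: Sym2_def)

lemma trace_scaleR: "trace (c *\<^sub>R (A::real^'n^'n)) = c * trace A"
  by (simp add: trace_def sum_distrib_left)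

lemma norm_matrix_vector_mult_le:
  "norm ((A::real^'n^'n) *v x) \<le> real CARD('n) * real CARD('n) * norm A * norm x"
proof -
  have "onorm ((*v) A) \<le> real CARD('n) * real CARD('n) * norm A"
    by (rule onorm_le_matrix_component)
      (rule order_trans[OF component_le_norm_cart Finite_Cartesian_Product.norm_nth_le])
  then show ?thesis
    using onorm[of "(*v) A" x] by (meson linear_conv_bounded_linear matrix_vector_mul_linear
        mult_right_mono norm_ge_zero order_trans)
qed

lemma quadratic_form_lower_bound:
  "x \<bullet> ((A::real^'n^'n) *v x) \<ge> - (real CARD('n) * real CARD('n) * norm A) * (x \<bullet> x)"
proof -
  have "\<bar>x \<bullet> (A *v x)\<bar> \<le> norm x * norm (A *v x)" by (rule Cauchy_Schwarz_ineq2)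
  also have "\<dots> \<le> norm x * (real CARD('n) * real CARD('n) * norm A * norm x)"
    by (rule mult_left_mono[OF norm_matrix_vector_mult_le]) simp
  also have "\<dots> = (real CARD('n) * real CARD('n) * norm A) * (x \<bullet> x)"
    by (simp add: dot_square_norm power2_eq_square)
  finally show ?thesis by (simp add: abs_le_iff)
qed

lemma inner_unit_square_le:
  fixes e :: "real^'n" assumes "norm e = 1" shows "(e \<bullet> x)\<^sup>2 \<le> x \<bullet> x"
proof -
  have "\<bar>e \<bullet> x\<bar> \<le> norm x" using Cauchy_Schwarz_ineq2[of e x] assms by simp
  then have "(e \<bullet> x)\<^sup>2 \<le> (norm x)\<^sup>2" by (metis abs_ge_zero power2_abs power_mono)
  then show ?thesis by (simp add: power2_norm_eq_inner)
qed

section \<open>Combinations of the two projections\<close>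

definition proj_comb :: "real^'n \<Rightarrow> real \<Rightarrow> real \<Rightarrow> real^'n^'n" where
  "proj_comb e a b = a *\<^sub>R proj_perp e + b *\<^sub>R proj_line e"

lemma proj_comb_add: "proj_comb e a b + proj_comb e c d = proj_comb e (a + c) (b + d)"
  by (simp add: proj_comb_def algebra_simps)

lemma proj_comb_scaleR: "c *\<^sub>R proj_comb e a b = proj_comb e (c * a) (c * b)"
  by (simp add: proj_comb_def algebra_simps)

lemma proj_comb_uminus: "- proj_comb e a b = proj_comb e (- a) (- b)"
  by (simp add: proj_comb_def algebra_simps)

lemma mat_1_eq_proj_comb: "mat 1 = proj_comb e 1 1"
  by (simp add: proj_comb_def proj_perp_def)

lemma proj_comb_in_Sym2: "proj_comb e a b \<in> Sym2"
  by (simp add: Sym2_def proj_comb_def proj_perp_def proj_line_def transpose_def vec_eq_iff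
      mat_def mult.commute)

lemma quadratic_form_proj_comb:
  "x \<bullet> (proj_comb e a b *v x) = a * (x \<bullet> x) + (b - a) * (e \<bullet> x)\<^sup>2"
proof -
  have "proj_line e *v x = (e \<bullet> x) *\<^sub>R e"
    by (simp add: proj_line_def matrix_vector_mult_def vec_eq_iff inner_vec_def
        sum_distrib_left sum_distrib_right algebra_simps)
  then show ?thesis
    by (simp add: proj_comb_def proj_perp_def matrix_vector_mult_add_rdistrib
        matrix_vector_mult_diff_rdistrib scaleR_matrix_vector_assoc[symmetric] algebra_simps
        inner_add_right power2_eq_square inner_commute)
qed

lemma quadratic_form_proj_comb_ge:
  fixes e :: "real^'n"
  assumes "norm e = 1"
  shows "x \<bullet> (proj_comb e a b *v x) \<ge> min a b * (x \<bullet> x)"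
proof -
  have "x \<bullet> (proj_comb e a b *v x) = a * (x \<bullet> x - (e \<bullet> x)\<^sup>2) + b * (e \<bullet> x)\<^sup>2"
    by (simp add: quadratic_form_proj_comb algebra_simps)
  also have "\<dots> \<ge> min a b * (x \<bullet> x - (e \<bullet> x)\<^sup>2) + min a b * (e \<bullet> x)\<^sup>2"
    using inner_unit_square_le[OF assms, of x] by (intro add_mono mult_right_mono) auto
  finally show ?thesis by (simp add: algebra_simps)
qed

lemma psd_proj_comb:
  fixes e :: "real^'n"
  assumes "norm e = 1" "a \<ge> 0" "b \<ge> 0"
  shows "psd (proj_comb e a b)"
  unfolding psd_def
proof (intro conjI allI proj_comb_in_Sym2)
  fix x :: "real^'n"
  have "0 \<le> min a b * (x \<bullet> x)" using assms by simp
  also have "\<dots> \<le> x \<bullet> (proj_comb e a b *v x)" by (rule quadratic_form_proj_comb_ge[OF assms(1)])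
  finally show "0 \<le> x \<bullet> (proj_comb e a b *v x)" .
qed

lemma trace_proj_comb:
  fixes e :: "real^'n"
  assumes "norm e = 1"
  shows "trace (proj_comb e a b) = a * (real CARD('n) - 1) + b"
proof -
  have "trace (proj_line e) = e \<bullet> e" by (simp add: trace_def proj_line_def inner_vec_def)
  then have "trace (proj_line e) = 1" using assms by (simp add: dot_square_norm)
  then show ?thesis
    by (simp add: proj_comb_def trace_add trace_scaleR proj_perp_def trace_sub trace_I)
qed

section \<open>Interiors relative to the symmetric matrices\<close>

lemma in_interior_of_Sym2_iff:
  "X \<in> (top_of_set Sym2) interior_of F \<longleftrightarrow>
     X \<in> Sym2 \<and> (\<exists>T. open T \<and> X \<in> T \<and> Sym2 \<inter> T \<subseteq> F)"
  unfolding interior_of_def openin_open by auto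

lemma interior_of_Sym2_vimage:
  fixes g :: "real^'n^'n \<Rightarrow> real^'n^'n"
  assumes "continuous_on UNIV g"
    and "\<And>Y. Y \<in> Sym2 \<Longrightarrow> g Y \<in> Sym2"
    and "\<And>Y. Y \<in> Sym2 \<Longrightarrow> g Y \<in> F \<Longrightarrow> Y \<in> E"
    and "X \<in> Sym2" "g X \<in> (top_of_set Sym2) interior_of F"
  shows "X \<in> (top_of_set Sym2) interior_of E"
proof -
  obtain T where T: "open T" "g X \<in> T" "Sym2 \<inter> T \<subseteq> F"
    using assms(5) by (auto simp: in_interior_of_Sym2_iff)
  have "open (g -` T)" using T(1) assms(1) by (simp add: continuous_on_open_vimage)
  moreover have "Sym2 \<inter> g -` T \<subseteq> E" using T(3) assms(2,3) by blast
  ultimately show ?thesis using T(2) assms(4) by (auto simp: in_interior_of_Sym2_iff)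
qed

lemma proj_comb_in_interior_psd:
  fixes e :: "real^'n"
  assumes "norm e = 1" "a > 0" "b > 0"
  shows "proj_comb e a b \<in> (top_of_set Sym2) interior_of Collect psd"
proof -
  define m where "m = min a b"
  define K where "K = real CARD('n) * real CARD('n)"
  let ?M = "proj_comb e a b"
  have m: "m > 0" using assms by (simp add: m_def)
  have K: "K > 0" by (simp add: K_def)
  have "psd Y" if Y: "Y \<in> Sym2" "norm (Y - ?M) < m / K" for Y
    unfolding psd_def
  proof (intro conjI allI Y(1))
    fix x :: "real^'n"
    have "K * norm (Y - ?M) * (x \<bullet> x) \<le> m * (x \<bullet> x)"
      using Y(2) K by (intro mult_right_mono) (simp_all add: field_simps)
    moreover have "x \<bullet> ((Y - ?M) *v x) \<ge> - (K * norm (Y - ?M) * (x \<bullet> x))"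
      using quadratic_form_lower_bound[where A = "Y - ?M" and x = x] by (simp add: K_def)
    moreover have "x \<bullet> (?M *v x) \<ge> m * (x \<bullet> x)"
      unfolding m_def by (rule quadratic_form_proj_comb_ge[OF assms(1)])
    moreover have "x \<bullet> (Y *v x) = x \<bullet> (?M *v x) + x \<bullet> ((Y - ?M) *v x)"
      by (simp add: matrix_vector_mult_diff_rdistrib inner_diff_right)
    ultimately show "0 \<le> x \<bullet> (Y *v x)" by linarith
  qed
  then have "Sym2 \<inter> ball ?M (m / K) \<subseteq> Collect psd"
    by (auto simp: dist_norm norm_minus_commute)
  moreover have "?M \<in> ball ?M (m / K)" using m K by simp
  ultimately show ?thesis
    using proj_comb_in_Sym2 by (auto simp: in_interior_of_Sym2_iff intro!: exI[of _ "ball ?M (m / K)"])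
qed

section \<open>Cone subequations and their duals\<close>

lemma zero_in_cone_subequation: "cone_subequation F \<Longrightarrow> 0 \<in> F"
  unfolding cone_subequation_def by (metis all_not_in_conv order_refl scale_zero_left)

lemma cone_subequation_psd_subset:
  assumes "cone_subequation F"
  shows "Collect psd \<subseteq> F"
  using zero_in_cone_subequation[OF assms] assms by (force simp: cone_subequation_def)

lemma cone_subequation_scaleR_iff:
  assumes "cone_subequation F" "c > 0"
  shows "c *\<^sub>R A \<in> F \<longleftrightarrow> A \<in> F"
proof
  have scale: "t *\<^sub>R B \<in> F" if "B \<in> F" "t \<ge> 0" for B t
    using assms(1) that by (simp add: cone_subequation_def)
  show "A \<in> F" if "c *\<^sub>R A \<in> F"
    using scale[OF that, of "1 / c"] assms(2) by simp
  show "c *\<^sub>R A \<in> F" if "A \<in> F"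
    using scale[OF that, of c] assms(2) by simp
qed

lemma cone_subequation_zero_notin_interior:
  assumes "cone_subequation F"
  shows "0 \<notin> (top_of_set Sym2) interior_of F"
proof
  assume "0 \<in> (top_of_set Sym2) interior_of F"
  then obtain T where T: "open T" "0 \<in> T" "Sym2 \<inter> T \<subseteq> F"
    by (auto simp: in_interior_of_Sym2_iff)
  obtain r where r: "r > 0" "ball 0 r \<subseteq> T" using open_contains_ball_eq[OF T(1)] T(2) by blast
  have "A \<in> F" if A: "A \<in> Sym2" for A
  proof -
    define s where "s = r / (2 * (norm A + 1))"
    have A1: "norm A + 1 > 0" by (smt (verit) norm_ge_zero)
    then have s: "s > 0" using r(1) by (simp add: s_def)
    have "norm (s *\<^sub>R A) \<le> s * (norm A + 1)" using s by simp
    also have "\<dots> = r / 2" using A1 by (simp add: s_def field_simps)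
    also have "\<dots> < r" using r(1) by simp
    finally have "norm (s *\<^sub>R A) < r" .
    then have "s *\<^sub>R A \<in> ball 0 r" by simp
    then have "s *\<^sub>R A \<in> F"
      using r(2) T(3) A subspace_mul[OF subspace_Sym2] by blast
    then show ?thesis using cone_subequation_scaleR_iff[OF assms s] by blast
  qed
  then show False using assms by (auto simp: cone_subequation_def)
qed

lemma cone_subequation_proj_comb_neg_notin:
  fixes e :: "real^'n"
  assumes "cone_subequation F" "norm e = 1" "a < 0" "b < 0"
  shows "proj_comb e a b \<notin> F"
proof
  assume M: "proj_comb e a b \<in> F"
  have "(0 :: real^'n^'n) \<in> (top_of_set Sym2) interior_of F"
  proof (rule interior_of_Sym2_vimage[where g = "\<lambda>Y. Y - proj_comb e a b"])
    show "Y \<in> F" if "Y \<in> Sym2" "Y - proj_comb e a b \<in> Collect psd" for Y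
      using assms(1) M that by (force simp: cone_subequation_def)
    show "0 - proj_comb e a b \<in> (top_of_set Sym2) interior_of Collect psd"
      using proj_comb_in_interior_psd[OF assms(2), of "- a" "- b"] assms(3,4)
      by (simp add: proj_comb_uminus)
  qed (auto intro!: continuous_intros subspace_0 subspace_diff subspace_Sym2 proj_comb_in_Sym2)
  then show False using cone_subequation_zero_notin_interior[OF assms(1)] by simp
qed

lemma uminus_in_Sym2_iff: "- A \<in> Sym2 \<longleftrightarrow> (A::real^'n^'n) \<in> Sym2"
  using subspace_neg[OF subspace_Sym2] by force

lemma mem_dual_subeq_iff:
  "M \<in> dual_subeq F \<longleftrightarrow> M \<in> Sym2 \<and> - M \<notin> (top_of_set Sym2) interior_of F"
  unfolding dual_subeq_def by (auto simp: image_iff)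

lemma closed_dual_subeq: "closed (dual_subeq (F :: (real^'n^'n) set))"
proof -
  obtain T where T: "open T" "(top_of_set Sym2) interior_of F = Sym2 \<inter> T"
    using openin_interior_of[of "top_of_set Sym2" F] by (meson openin_open)
  have "dual_subeq F = Sym2 \<inter> - (uminus ` T)"
    using T(2) by (auto simp: mem_dual_subeq_iff uminus_in_Sym2_iff image_iff) (metis minus_minus)
  moreover have "closed (Sym2 \<inter> - (uminus ` T))"
    using closed_Sym2 open_negations[OF T(1)] by (auto simp: closed_Compl)
  ultimately show ?thesis by simp
qed

lemma dual_subeq_add_psd:
  assumes "cone_subequation F" "M \<in> dual_subeq F" "psd P"
  shows "M + P \<in> dual_subeq F"
proof -
  have M: "M \<in> Sym2" "- M \<notin> (top_of_set Sym2) interior_of F"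
    using assms(2) by (auto simp: mem_dual_subeq_iff)
  have P: "P \<in> Sym2" using assms(3) by (simp add: psd_def)
  have "- (M + P) \<notin> (top_of_set Sym2) interior_of F"
  proof
    assume MP: "- (M + P) \<in> (top_of_set Sym2) interior_of F"
    have "- M \<in> (top_of_set Sym2) interior_of F"
    proof (rule interior_of_Sym2_vimage[where g = "\<lambda>Y. Y - P"])
      show "- M - P \<in> (top_of_set Sym2) interior_of F" using MP by (simp add: algebra_simps)
      show "Y \<in> F" if "Y \<in> Sym2" "Y - P \<in> F" for Y
        using assms(1,3) that by (force simp: cone_subequation_def)
    qed (use M P in \<open>auto intro!: continuous_intros subspace_neg subspace_diff subspace_Sym2\<close>)
    then show False using M(2) by simp
  qed
  then show ?thesis using M P by (simp add: mem_dual_subeq_iff subspace_add[OF subspace_Sym2])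
qed

lemma dual_subeq_scaleR:
  assumes "cone_subequation F" "M \<in> dual_subeq F" "c > 0"
  shows "c *\<^sub>R M \<in> dual_subeq F"
proof -
  have M: "M \<in> Sym2" "- M \<notin> (top_of_set Sym2) interior_of F"
    using assms(2) by (auto simp: mem_dual_subeq_iff)
  have "- (c *\<^sub>R M) \<notin> (top_of_set Sym2) interior_of F"
  proof
    assume cM: "- (c *\<^sub>R M) \<in> (top_of_set Sym2) interior_of F"
    have "- M \<in> (top_of_set Sym2) interior_of F"
    proof (rule interior_of_Sym2_vimage[where g = "\<lambda>Y. c *\<^sub>R Y"])
      show "c *\<^sub>R - M \<in> (top_of_set Sym2) interior_of F" using cM by simp
      show "Y \<in> F" if "c *\<^sub>R Y \<in> F" for Y
        using cone_subequation_scaleR_iff[OF assms(1,3)] that by blast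
    qed (use M in \<open>auto intro!: continuous_intros subspace_neg subspace_mul subspace_Sym2\<close>)
    then show False using M(2) by simp
  qed
  then show ?thesis using M by (simp add: mem_dual_subeq_iff subspace_mul[OF subspace_Sym2])
qed

lemma zero_in_dual_subeq: "cone_subequation F \<Longrightarrow> 0 \<in> dual_subeq F"
  using cone_subequation_zero_notin_interior[of F] subspace_0[OF subspace_Sym2]
  unfolding mem_dual_subeq_iff by simp

lemma dual_subeq_proj_comb_neg_notin:
  fixes e :: "real^'n"
  assumes "cone_subequation F" "norm e = 1" "a < 0" "b < 0"
  shows "proj_comb e a b \<notin> dual_subeq F"
proof -
  have "proj_comb e (- a) (- b) \<in> (top_of_set Sym2) interior_of Collect psd"
    using proj_comb_in_interior_psd[OF assms(2)] assms(3,4) by simp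
  then have "proj_comb e (- a) (- b) \<in> (top_of_set Sym2) interior_of F"
    using interior_of_mono[OF cone_subequation_psd_subset[OF assms(1)]] by blast
  then show ?thesis by (simp add: mem_dual_subeq_iff proj_comb_uminus)
qed

section \<open>The trace shift defining \<open>F(\<delta>)\<close>\<close>

definition trace_shift :: "real \<Rightarrow> real^'n^'n \<Rightarrow> real^'n^'n" where
  "trace_shift \<delta> A = A + (\<delta> * trace A / real CARD('n)) *\<^sub>R mat 1"

lemma F_delta_eq: "F_delta F \<delta> = {A \<in> Sym2. trace_shift \<delta> A \<in> F}"
  by (simp add: F_delta_def trace_shift_def)

lemma trace_trace_shift: "trace (trace_shift \<delta> A) = (1 + \<delta>) * trace A"
  by (simp add: trace_shift_def trace_add trace_scaleR trace_I algebra_simps)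

lemma trace_shift_trace_shift:
  "trace_shift a (trace_shift b (A :: real^'n^'n)) = trace_shift (a + b + a * b) A"
proof -
  have "b * trace A / real CARD('n) + a * ((1 + b) * trace A) / real CARD('n)
          = (a + b + a * b) * trace A / real CARD('n)"
    by (simp add: algebra_simps add_divide_distrib)
  then show ?thesis
    unfolding trace_shift_def[of a] trace_trace_shift unfolding trace_shift_def
    by (simp add: add.assoc scaleR_add_left[symmetric])
qed

lemma trace_shift_zero [simp]: "trace_shift 0 A = A"
  by (simp add: trace_shift_def)

lemma trace_shift_inverse:
  assumes "\<delta> \<ge> 0"
  shows "trace_shift (- \<delta> / (1 + \<delta>)) (trace_shift \<delta> A) = A"
    and "trace_shift \<delta> (trace_shift (- \<delta> / (1 + \<delta>)) A) = A"
proof -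
  have "- \<delta> / (1 + \<delta>) + \<delta> + - \<delta> / (1 + \<delta>) * \<delta> = 0"
    and "\<delta> + - \<delta> / (1 + \<delta>) + \<delta> * (- \<delta> / (1 + \<delta>)) = 0"
    using assms by (simp_all add: field_simps)
  then show "trace_shift (- \<delta> / (1 + \<delta>)) (trace_shift \<delta> A) = A"
    and "trace_shift \<delta> (trace_shift (- \<delta> / (1 + \<delta>)) A) = A"
    by (simp_all only: trace_shift_trace_shift trace_shift_zero)
qed

lemma trace_shift_uminus: "trace_shift \<delta> (- A) = - trace_shift \<delta> A"
  by (simp add: trace_shift_def trace_def sum_negf algebra_simps)

lemma trace_shift_in_Sym2: "A \<in> Sym2 \<Longrightarrow> trace_shift \<delta> A \<in> Sym2"
  unfolding trace_shift_def
  by (intro subspace_add[OF subspace_Sym2] subspace_mul[OF subspace_Sym2] mat_1_in_Sym2)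

lemma continuous_on_trace_shift: "continuous_on UNIV (trace_shift \<delta>)"
  unfolding trace_shift_def trace_def by (intro continuous_intros) auto

lemma interior_of_F_delta_iff:
  assumes "\<delta> \<ge> 0" "X \<in> Sym2"
  shows "X \<in> (top_of_set Sym2) interior_of (F_delta F \<delta>)
           \<longleftrightarrow> trace_shift \<delta> X \<in> (top_of_set Sym2) interior_of F"
proof
  assume X: "X \<in> (top_of_set Sym2) interior_of (F_delta F \<delta>)"
  show "trace_shift \<delta> X \<in> (top_of_set Sym2) interior_of F"
  proof (rule interior_of_Sym2_vimage[where g = "trace_shift (- \<delta> / (1 + \<delta>))"])
    show "Y \<in> F" if "trace_shift (- \<delta> / (1 + \<delta>)) Y \<in> F_delta F \<delta>" for Y
      using that trace_shift_inverse(2)[OF assms(1), of Y] by (simp add: F_delta_eq)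
    show "trace_shift (- \<delta> / (1 + \<delta>)) (trace_shift \<delta> X) \<in> (top_of_set Sym2) interior_of F_delta F \<delta>"
      using X trace_shift_inverse(1)[OF assms(1), of X] by simp
  qed (simp_all add: continuous_on_trace_shift trace_shift_in_Sym2 assms(2))
next
  assume "trace_shift \<delta> X \<in> (top_of_set Sym2) interior_of F"
  then show "X \<in> (top_of_set Sym2) interior_of (F_delta F \<delta>)"
    using assms(2) interior_of_Sym2_vimage[where g = "trace_shift \<delta>" and E = "F_delta F \<delta>"]
    by (simp add: F_delta_eq continuous_on_trace_shift trace_shift_in_Sym2)
qed

lemma dual_subeq_F_delta:
  assumes "\<delta> \<ge> 0"
  shows "dual_subeq (F_delta F \<delta>) = F_delta (dual_subeq F) \<delta>"
proof -
  have "M \<in> dual_subeq (F_delta F \<delta>) \<longleftrightarrow> M \<in> F_delta (dual_subeq F) \<delta>" if M: "M \<in> Sym2" for M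
    using interior_of_F_delta_iff[OF assms, of "- M" F] M
    by (simp add: mem_dual_subeq_iff F_delta_eq uminus_in_Sym2_iff trace_shift_in_Sym2
        trace_shift_uminus)
  moreover have "dual_subeq G \<subseteq> Sym2" for G :: "(real^'n^'n) set"
    by (auto simp: mem_dual_subeq_iff)
  ultimately show ?thesis by (auto simp: F_delta_eq)
qed

section \<open>The Riesz set\<close>

definition riesz_set :: "(real^'n^'n) set \<Rightarrow> real^'n \<Rightarrow> real set" where
  "riesz_set S e = {t. proj_perp e - (t - 1) *\<^sub>R proj_line e \<in> S}"

lemma riesz_char_eq_Sup: "riesz_char S e = Sup (ereal ` riesz_set S e)"
  unfolding riesz_char_def riesz_set_def by (rule arg_cong[of _ _ Sup]) auto

lemma mem_riesz_set_iff: "t \<in> riesz_set S e \<longleftrightarrow> proj_comb e 1 (1 - t) \<in> S"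
proof -
  have "proj_perp e - (t - 1) *\<^sub>R proj_line e = proj_comb e 1 (1 - t)"
    by (simp add: proj_comb_def algebra_simps)
  then show ?thesis by (simp add: riesz_set_def)
qed

lemma Sup_ereal_atMost: "Sup (ereal ` {..x}) = ereal x"
  by (rule antisym) (auto intro: Sup_least Sup_upper)

lemma Sup_range_ereal: "Sup (range ereal) = \<infinity>"
  by (rule SUP_PInfty) auto

lemma F_delta_threshold:
  fixes n \<delta> p t :: real
  assumes n: "0 < n" and \<delta>: "0 \<le> \<delta>" and p: "0 \<le> p"
  shows "(0 < 1 + \<delta> * (n - t) / n \<and> t / (1 + \<delta> * (n - t) / n) \<le> p)
           \<longleftrightarrow> t \<le> n * (1 + \<delta>) * p / (n + \<delta> * p)"
proof -
  define c where "c = 1 + \<delta> * (n - t) / n"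
  have cn: "c * n = n + \<delta> * (n - t)" using n by (simp add: c_def field_simps)
  have den: "0 < n + \<delta> * p" using n \<delta> p by (simp add: add_pos_nonneg)
  have "t \<le> p * c \<longleftrightarrow> t * n \<le> p * (c * n)" using n by simp
  also have "\<dots> \<longleftrightarrow> t * (n + \<delta> * p) \<le> n * (1 + \<delta>) * p" unfolding cn by argo
  also have "\<dots> \<longleftrightarrow> t \<le> n * (1 + \<delta>) * p / (n + \<delta> * p)" using den by (simp add: le_divide_eq)
  finally have key: "t \<le> p * c \<longleftrightarrow> t \<le> n * (1 + \<delta>) * p / (n + \<delta> * p)" .
  have "0 < c" if "t * (n + \<delta> * p) \<le> n * (1 + \<delta>) * p"
  proof -
    have "(n + \<delta> * p) * (c * n) = (n + \<delta> * p) * (n + \<delta> * n) - \<delta> * (t * (n + \<delta> * p))"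
      unfolding cn by argo
    also have "\<dots> \<ge> (n + \<delta> * p) * (n + \<delta> * n) - \<delta> * (n * (1 + \<delta>) * p)"
      using that \<delta> by (simp add: mult_left_mono)
    also have "(n + \<delta> * p) * (n + \<delta> * n) - \<delta> * (n * (1 + \<delta>) * p) = n * n * (1 + \<delta>)"
      by argo
    finally have "0 < (n + \<delta> * p) * (c * n)" using n \<delta> by (smt (verit) mult_pos_pos)
    then show ?thesis using den n by (simp add: zero_less_mult_iff)
  qed
  then show ?thesis
    using key den by (auto simp: c_def[symmetric] divide_le_eq le_divide_eq mult.commute)
qed

lemma F_delta_riesz_formula_alt:
  fixes n \<delta> p :: real
  assumes "0 < n" "0 \<le> \<delta>" "0 \<le> p"
  shows "n * (1 + \<delta>) * p / (n + \<delta> * p) = p + \<delta> * p * (n - p) / (n + \<delta> * p)"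
proof -
  have "0 < n + \<delta> * p" using assms by (simp add: add_pos_nonneg)
  then show ?thesis by (simp add: field_simps)
qed

locale riesz_cone =
  fixes S :: "(real^'n^'n) set" and e :: "real^'n"
  assumes norm_e: "norm e = 1"
    and closed: "closed S"
    and add_psd: "A \<in> S \<Longrightarrow> psd P \<Longrightarrow> A + P \<in> S"
    and scaleR: "A \<in> S \<Longrightarrow> c > 0 \<Longrightarrow> c *\<^sub>R A \<in> S"
    and zero: "0 \<in> S"
    and proj_comb_neg_notin: "a < 0 \<Longrightarrow> b < 0 \<Longrightarrow> proj_comb e a b \<notin> S"
begin

lemma proj_comb_add_nonneg:
  assumes "proj_comb e a b \<in> S" "0 \<le> c" "0 \<le> d"
  shows "proj_comb e (a + c) (b + d) \<in> S"
  using add_psd[OF assms(1) psd_proj_comb[OF norm_e assms(2,3)]] by (simp add: proj_comb_add)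

lemma proj_comb_scaleR_iff:
  assumes "c > 0"
  shows "proj_comb e (c * a) (c * b) \<in> S \<longleftrightarrow> proj_comb e a b \<in> S"
proof
  assume "proj_comb e (c * a) (c * b) \<in> S"
  from scaleR[OF this, of "1 / c"] assms show "proj_comb e a b \<in> S"
    by (simp add: proj_comb_scaleR)
qed (use scaleR[OF _ assms] in \<open>simp add: proj_comb_scaleR[symmetric]\<close>)

lemma proj_comb_mem_iff:
  assumes "c > 0"
  shows "proj_comb e c d \<in> S \<longleftrightarrow> 1 - d / c \<in> riesz_set S e"
  using proj_comb_scaleR_iff[OF assms, of 1 "d / c"] assms by (simp add: mem_riesz_set_iff)

lemma proj_comb_zero_mem_iff:
  assumes "d < 0"
  shows "proj_comb e 0 d \<in> S \<longleftrightarrow> proj_comb e 0 (-1) \<in> S"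
  using proj_comb_scaleR_iff[of "- d" 0 "-1"] assms by simp

lemma riesz_set_downward: "t \<in> riesz_set S e \<Longrightarrow> s \<le> t \<Longrightarrow> s \<in> riesz_set S e"
  using proj_comb_add_nonneg[of 1 "1 - t" 0 "t - s"] by (simp add: mem_riesz_set_iff)

lemma one_in_riesz_set: "1 \<in> riesz_set S e"
  using proj_comb_add_nonneg[of 0 0 1 0] zero by (simp add: mem_riesz_set_iff proj_comb_def)

lemma closed_riesz_set: "closed (riesz_set S e)"
proof -
  have "riesz_set S e = (\<lambda>t. proj_comb e 1 (1 - t)) -` S" by (auto simp: mem_riesz_set_iff)
  then show ?thesis
    using closed by (auto simp: proj_comb_def intro!: continuous_closed_vimage continuous_intros)
qed

text \<open>\<open>proj_comb e 0 (-1)\<close> is the limit of the rescalings \<open>proj_comb e (1/k) (-1)\<close> of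
  \<open>proj_comb e 1 (-k)\<close>, which lie in \<open>S\<close> when the Riesz set is unbounded.\<close>

lemma riesz_set_eq_UNIV_iff: "riesz_set S e = UNIV \<longleftrightarrow> proj_comb e 0 (-1) \<in> S"
proof
  assume T: "riesz_set S e = UNIV"
  have "proj_comb e (inverse (real (Suc k))) (-1) \<in> S" for k
  proof -
    have "1 + real (Suc k) \<in> riesz_set S e" using T by simp
    then have "proj_comb e 1 (- real (Suc k)) \<in> S" by (simp add: mem_riesz_set_iff)
    then have "proj_comb e (inverse (real (Suc k)) * 1) (inverse (real (Suc k)) * - real (Suc k)) \<in> S"
      by (subst proj_comb_scaleR_iff) simp_all
    moreover have "inverse (real (Suc k)) * - real (Suc k) = -1" by (simp del: of_nat_Suc)
    ultimately show ?thesis by (simp only: mult_1_right)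
  qed
  moreover have "(\<lambda>k. proj_comb e (inverse (real (Suc k))) (-1)) \<longlonglongrightarrow> proj_comb e 0 (-1)"
    unfolding proj_comb_def by (intro tendsto_add tendsto_scaleR tendsto_const LIMSEQ_inverse_real_of_nat)
  ultimately show "proj_comb e 0 (-1) \<in> S"
    by (rule closed_sequentially[OF closed])
next
  assume neg: "proj_comb e 0 (-1) \<in> S"
  have "t \<in> riesz_set S e" for t
  proof -
    have "proj_comb e 0 (- (\<bar>t\<bar> + 1)) \<in> S"
      using proj_comb_zero_mem_iff[of "- (\<bar>t\<bar> + 1)"] neg by simp
    then have "proj_comb e 1 (- (\<bar>t\<bar> + 1)) \<in> S"
      using proj_comb_add_nonneg[of 0 "- (\<bar>t\<bar> + 1)" 1 0] by simp
    moreover have "1 - (\<bar>t\<bar> + 2) = - (\<bar>t\<bar> + 1)" by simp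
    ultimately have "\<bar>t\<bar> + 2 \<in> riesz_set S e" by (simp only: mem_riesz_set_iff)
    then show ?thesis by (rule riesz_set_downward) simp
  qed
  then show "riesz_set S e = UNIV" by blast
qed

lemma riesz_set_cases:
  obtains p where "1 \<le> p" "riesz_set S e = {..p}" "riesz_char S e = ereal p"
  | "riesz_set S e = UNIV" "riesz_char S e = \<infinity>"
proof (cases "bdd_above (riesz_set S e)")
  case True
  define p where "p = Sup (riesz_set S e)"
  have "p \<in> riesz_set S e"
    unfolding p_def using closed_contains_Sup[OF _ True closed_riesz_set] one_in_riesz_set by blast
  then have "riesz_set S e = {..p}"
    using cSup_upper[OF _ True] riesz_set_downward by (auto simp: p_def)
  moreover have "1 \<le> p" using one_in_riesz_set calculation by auto
  ultimately show thesis
    using that(1) by (simp add: riesz_char_eq_Sup Sup_ereal_atMost)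
next
  case False
  have "t \<in> riesz_set S e" for t
  proof -
    obtain t' where "t' \<in> riesz_set S e" "t \<le> t'"
      using False bdd_above.I[of "riesz_set S e" t] by (meson linorder_le_cases)
    then show ?thesis by (rule riesz_set_downward)
  qed
  then have "riesz_set S e = UNIV" by blast
  then show thesis using that(2) Sup_range_ereal by (simp add: riesz_char_eq_Sup del: range_ereal)
qed

lemma riesz_char_ge_one: "riesz_char S e \<ge> 1"
  by (cases rule: riesz_set_cases) (auto simp: one_ereal_def)

lemma mem_riesz_set_F_delta_iff:
  assumes "\<delta> \<ge> 0" and c: "c = 1 + \<delta> * (real CARD('n) - t) / real CARD('n)"
  shows "t \<in> riesz_set (F_delta S \<delta>) e \<longleftrightarrow>
           (0 < c \<and> t / c \<in> riesz_set S e) \<or> (c = 0 \<and> riesz_set S e = UNIV)"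
proof -
  have n: "real CARD('n) > 0" by simp
  have tr: "trace (proj_comb e 1 (1 - t)) = real CARD('n) - t"
    using trace_proj_comb[OF norm_e] by simp
  have "trace_shift \<delta> (proj_comb e 1 (1 - t)) = proj_comb e c (c - t)"
    unfolding trace_shift_def tr mat_1_eq_proj_comb[of e] proj_comb_scaleR proj_comb_add
    by (rule arg_cong2[where f = "proj_comb e"]) (simp_all add: c)
  then have mem: "t \<in> riesz_set (F_delta S \<delta>) e \<longleftrightarrow> proj_comb e c (c - t) \<in> S"
    by (simp add: mem_riesz_set_iff F_delta_eq proj_comb_in_Sym2)
  show ?thesis
  proof (cases "c > 0")
    case True
    have "1 - (c - t) / c = t / c" using True by (simp add: field_simps)
    then show ?thesis using mem proj_comb_mem_iff[OF True] True by simp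
  next
    case False
    then have "\<delta> * (real CARD('n) - t) / real CARD('n) < 0" using c by simp
    then have "\<delta> * (real CARD('n) - t) < 0" using n by (simp add: divide_less_0_iff)
    then have "t > 0" using assms(1) n by (smt (verit) mult_nonneg_nonneg)
    then have "c - t < 0" using False by simp
    show ?thesis
    proof (cases "c = 0")
      case True
      then show ?thesis
        using mem proj_comb_zero_mem_iff[OF \<open>c - t < 0\<close>] riesz_set_eq_UNIV_iff by simp
    next
      case False
      then show ?thesis
        using mem \<open>\<not> c > 0\<close> proj_comb_neg_notin[OF _ \<open>c - t < 0\<close>] by simp
    qed
  qed
qed

lemma riesz_char_F_delta_finite:
  assumes "\<delta> \<ge> 0" "riesz_char S e = ereal p"
  defines "n \<equiv> real CARD('n)"
  shows "riesz_char (F_delta S \<delta>) e = ereal (n * (1 + \<delta>) * p / (n + \<delta> * p))"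
proof (cases rule: riesz_set_cases)
  case (1 p')
  then have T: "riesz_set S e = {..p}" "1 \<le> p" using assms(2) by auto
  have "{..p} \<noteq> UNIV" using gt_ex[of p] by auto
  then have "riesz_set (F_delta S \<delta>) e = {..n * (1 + \<delta>) * p / (n + \<delta> * p)}"
    using mem_riesz_set_F_delta_iff[OF assms(1) refl] F_delta_threshold[of n \<delta> p] T assms(1)
    by (auto simp: n_def)
  then show ?thesis by (simp add: riesz_char_eq_Sup Sup_ereal_atMost)
next
  case 2
  with assms(2) show ?thesis by simp
qed

lemma riesz_char_F_delta_infinite:
  assumes "\<delta> > 0" "riesz_char S e = \<infinity>"
  defines "n \<equiv> real CARD('n)"
  shows "riesz_char (F_delta S \<delta>) e = ereal (n * (1 + \<delta>) / \<delta>)"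
proof (cases rule: riesz_set_cases)
  case 1
  with assms(2) show ?thesis by simp
next
  case 2
  have n: "n > 0" by (simp add: n_def)
  have "t \<in> riesz_set (F_delta S \<delta>) e \<longleftrightarrow> t \<le> n * (1 + \<delta>) / \<delta>" for t
  proof -
    have "0 \<le> 1 + \<delta> * (n - t) / n \<longleftrightarrow> \<delta> * t \<le> n * (1 + \<delta>)"
      using n by (simp add: field_simps)
    also have "\<dots> \<longleftrightarrow> t \<le> n * (1 + \<delta>) / \<delta>"
      using assms(1) by (simp add: le_divide_eq mult.commute)
    finally show ?thesis
      using mem_riesz_set_F_delta_iff[OF _ refl, of \<delta> t] assms(1) 2 by (auto simp: n_def)
  qed
  then have "riesz_set (F_delta S \<delta>) e = {..n * (1 + \<delta>) / \<delta>}" by auto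
  then show ?thesis by (simp add: riesz_char_eq_Sup Sup_ereal_atMost)
qed

end

lemma riesz_cone_cone_subequation:
  assumes "cone_subequation F" "norm e = 1"
  shows "riesz_cone F e"
proof
  show "closed F" "\<And>A P. A \<in> F \<Longrightarrow> psd P \<Longrightarrow> A + P \<in> F"
    using assms(1) by (simp_all add: cone_subequation_def)
  show "\<And>A c. A \<in> F \<Longrightarrow> 0 < c \<Longrightarrow> c *\<^sub>R A \<in> F"
    using cone_subequation_scaleR_iff[OF assms(1)] by blast
  show "\<And>a b. a < 0 \<Longrightarrow> b < 0 \<Longrightarrow> proj_comb e a b \<notin> F"
    by (rule cone_subequation_proj_comb_neg_notin[OF assms])
qed (simp_all add: assms zero_in_cone_subequation)

lemma riesz_cone_dual_subeq:
  assumes "cone_subequation F" "norm e = 1"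
  shows "riesz_cone (dual_subeq F) e"
proof
  show "\<And>A P. A \<in> dual_subeq F \<Longrightarrow> psd P \<Longrightarrow> A + P \<in> dual_subeq F"
    by (rule dual_subeq_add_psd[OF assms(1)])
  show "\<And>A c. A \<in> dual_subeq F \<Longrightarrow> 0 < c \<Longrightarrow> c *\<^sub>R A \<in> dual_subeq F"
    by (rule dual_subeq_scaleR[OF assms(1)])
  show "\<And>a b. a < 0 \<Longrightarrow> b < 0 \<Longrightarrow> proj_comb e a b \<notin> dual_subeq F"
    by (rule dual_subeq_proj_comb_neg_notin[OF assms])
qed (simp_all add: assms closed_dual_subeq zero_in_dual_subeq)

theorem propositionA11:
  fixes F G :: "(real^'n^'n) set" and e :: "real^'n" and \<delta> :: real
  assumes "cone_subequation F"
    and "transitive_orth_subgroup G"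
    and "invariant_under G F"
    and "norm e = 1"
    and "\<delta> \<ge> 0"
  defines "n \<equiv> real CARD('n)"
  defines "p \<equiv> riesz_char F e"
  defines "q \<equiv> riesz_char (dual_subeq F) e"
  shows "(p \<noteq> \<infinity> \<longrightarrow>
            riesz_char (F_delta F \<delta>) e
              = ereal (n * (1 + \<delta>) * real_of_ereal p / (n + \<delta> * real_of_ereal p)) \<and>
            riesz_char (F_delta F \<delta>) e
              = ereal (real_of_ereal p + \<delta> * real_of_ereal p * (n - real_of_ereal p)
                                        / (n + \<delta> * real_of_ereal p)))
       \<and> (q \<noteq> \<infinity> \<longrightarrow>
            riesz_char (dual_subeq (F_delta F \<delta>)) e
              = ereal (n * (1 + \<delta>) * real_of_ereal q / (n + \<delta> * real_of_ereal q)) \<and>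
            riesz_char (dual_subeq (F_delta F \<delta>)) e
              = ereal (real_of_ereal q + \<delta> * real_of_ereal q * (n - real_of_ereal q)
                                        / (n + \<delta> * real_of_ereal q)))
       \<and> (p = \<infinity> \<longrightarrow> \<delta> > 0 \<longrightarrow> riesz_char (F_delta F \<delta>) e = ereal (n * (1 + \<delta>) / \<delta>))
       \<and> (q = \<infinity> \<longrightarrow> \<delta> > 0 \<longrightarrow> riesz_char (dual_subeq (F_delta F \<delta>)) e = ereal (n * (1 + \<delta>) / \<delta>))"
proof -
  \<comment> \<open>The hypotheses on \<open>G\<close> only make \<open>p\<close> and \<open>q\<close> independent of \<open>e\<close>.\<close>
  interpret F: riesz_cone F e by (rule riesz_cone_cone_subequation) fact+
  interpret D: riesz_cone "dual_subeq F" e by (rule riesz_cone_dual_subeq) fact+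
  have n: "n > 0" by (simp add: n_def)
  have p: "p = ereal (real_of_ereal p)" "0 \<le> real_of_ereal p" if "p \<noteq> \<infinity>"
    using F.riesz_char_ge_one that unfolding p_def by (cases "riesz_char F e"; simp)+
  have q: "q = ereal (real_of_ereal q)" "0 \<le> real_of_ereal q" if "q \<noteq> \<infinity>"
    using D.riesz_char_ge_one that unfolding q_def by (cases "riesz_char (dual_subeq F) e"; simp)+
  show ?thesis
    using F.riesz_char_F_delta_finite[OF assms(5) p(1)[unfolded p_def]]
      D.riesz_char_F_delta_finite[OF assms(5) q(1)[unfolded q_def]]
      F.riesz_char_F_delta_infinite D.riesz_char_F_delta_infinite
      F_delta_riesz_formula_alt[OF n assms(5)] p(2) q(2)
    unfolding dual_subeq_F_delta[OF assms(5)] p_def[symmetric] q_def[symmetric] n_def[symmetric]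
    by auto
qed

end
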